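(* Assume the standing setup. For any distinct $i,j\in[k]$ there exist distinct indices $i_2,\dots,i_d\in[k]$ such that: (1) if $\alpha_i,\alpha_j$ are not proportional, then $\alpha_i,\alpha_j,\alpha_{i_2},\dots,\alpha_{i_d}$ are linearly independent; (2) if $\alpha_i,\alpha_j$ are proportional, then $\alpha_i,\alpha_{i_2},\dots,\alpha_{i_d}$ are linearly independent.
   Context: Standing setup: $\mathbb{F}$ is a field of characteristic $0$; $W$ is a group with finite generating set $S=\{s_1,\dots,s_k\}$. A linear map on a finite-dimensional space is a (generalized) reflection if it is diagonalizable and $s-\operatorname{Id}$ has rank $1$; a reflection vector is a nonzero vector in $\operatorname{Im}(s-\operatorname{Id})$. $(V_1,\rho_1)$ is an irreducible reflection representation of $(W,S)$ (each $s_i$ acts by a reflection) of dimension $n$, and $\alpha_i\in V_1$ is a chosen reflection vector of $s_i$ for each $i\in[k]$. $d$ is an integer with $1\le d\le n-1$. *)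

theory Defs
  imports "HOL-Analysis.Analysis" "HOL-Algebra.Generated_Groups"
begin

text \<open>Vectors of the n-dimensional representation space V1 are elements of 'f^'n,
  linear maps are matrices 'f^'n^'n over a field 'f of characteristic 0.\<close>

definition diagonalizable :: "'f::field^'n^'n \<Rightarrow> bool" where
  "diagonalizable A \<longleftrightarrow> (\<exists>P D::'f^'n^'n. invertible P \<and>
      (\<forall>i j. i \<noteq> j \<longrightarrow> D $ i $ j = 0) \<and> A = P ** D ** matrix_inv P)"

definition is_reflection :: "'f::field^'n^'n \<Rightarrow> bool" where
  "is_reflection A \<longleftrightarrow> diagonalizable A \<and> rank (A - mat 1) = 1"

definition reflection_vector :: "'f::field^'n^'n \<Rightarrow> 'f^'n \<Rightarrow> bool" where
  "reflection_vector A v \<longleftrightarrow> v \<noteq> 0 \<and> v \<in> range (\<lambda>x. (A - mat 1) *v x)"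

definition is_representation :: "('g, 'b) monoid_scheme \<Rightarrow> ('g \<Rightarrow> 'f::field^'n^'n) \<Rightarrow> bool" where
  "is_representation G rho \<longleftrightarrow> rho \<one>\<^bsub>G\<^esub> = mat 1 \<and>
     (\<forall>g\<in>carrier G. \<forall>h\<in>carrier G. rho (g \<otimes>\<^bsub>G\<^esub> h) = rho g ** rho h)"

definition irreducible_rep :: "('g, 'b) monoid_scheme \<Rightarrow> ('g \<Rightarrow> 'f::field^'n^'n) \<Rightarrow> bool" where
  "irreducible_rep G rho \<longleftrightarrow> (UNIV :: ('f^'n) set) \<noteq> {0} \<and>
     (\<forall>U. vec.subspace U \<and> (\<forall>g\<in>carrier G. \<forall>u\<in>U. rho g *v u \<in> U)
          \<longrightarrow> U = {0} \<or> U = UNIV)"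

definition proportional :: "'f::field^'n \<Rightarrow> 'f^'n \<Rightarrow> bool" where
  "proportional u v \<longleftrightarrow> (\<exists>c. u = c *s v \<or> v = c *s u)"

definition lin_indep_family :: "('f::field^'n) list \<Rightarrow> bool" where
  "lin_indep_family vs \<longleftrightarrow> distinct vs \<and> vec.independent (set vs)"

end

theory Submission imports Defs begin

text \<open>The reflection vectors span a subspace that every generator maps into itself, since
  \<open>s v = v + (s - 1) v\<close> with \<open>(s - 1) v\<close> a multiple of the reflection vector of \<open>s\<close>; by finite
  dimensionality the inverses of the generators preserve it as well, so it is invariant under
  the whole group. Irreducibility forces it to be the whole space, and any independent family
  of reflection vectors (one vector, or two non-proportional ones) then extends by reflection
  vectors to an independent family of any length up to the dimension.\<close>

lemma rank_one_range_subset_span: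
  fixes M :: "'f::field^'n^'m"
  assumes "rank M = 1" and "a \<in> range ((*v) M)" and "a \<noteq> 0"
  shows "M *v u \<in> vec.span {a}"
proof -
  obtain B where B: "B \<subseteq> rows M" "vec.independent B" "rows M \<subseteq> vec.span B" "card B = vec.dim (rows M)"
    using vec.basis_exists by blast
  have "card B = 1"
    using B(4) assms(1) by (simp add: row_rank_def_gen)
  then obtain r where r: "B = {r}"
    using card_1_singletonE by blast
  have "\<exists>t. M $ i = t *s r" for i
  proof -
    have "row i M \<in> rows M"
      unfolding rows_def by blast
    then have "M $ i \<in> vec.span {r}"
      using B(3) r by (auto simp: row_def)
    then show ?thesis by (auto simp: vec.span_singleton)
  qed
  then obtain c where c: "\<And>i. M $ i = c i *s r" by metis
  have range_c: "M *v v = (\<Sum>j\<in>UNIV. r $ j * v $ j) *s (\<chi> i. c i)" for v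
    by (simp add: matrix_vector_mult_def c vec_eq_iff sum_distrib_left mult.assoc
        mult.commute mult.left_commute)
  obtain x where "a = M *v x"
    using assms(2) by blast
  then obtain t0 where t0: "a = t0 *s (\<chi> i. c i)"
    using range_c by metis
  with assms(3) have "t0 \<noteq> 0" by auto
  have "M *v u = ((\<Sum>j\<in>UNIV. r $ j * u $ j) / t0) *s a"
    using t0 \<open>t0 \<noteq> 0\<close> by (simp add: range_c vector_smult_assoc)
  then show ?thesis by (auto simp: vec.span_singleton)
qed

lemma reflection_image_subset_span:
  assumes "is_reflection A" and "reflection_vector A a"
  shows "(A - mat 1) *v u \<in> vec.span {a}"
proof (rule rank_one_range_subset_span)
  show "rank (A - mat 1) = 1"
    using assms(1) by (simp add: is_reflection_def)
  show "a \<in> range ((*v) (A - mat 1))" "a \<noteq> 0"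
    using assms(2) by (simp_all add: reflection_vector_def)
qed

lemma reflection_preserves_subspace:
  assumes "is_reflection A" and "reflection_vector A a"
    and "vec.subspace U" and "a \<in> U" and "u \<in> U"
  shows "A *v u \<in> U"
proof -
  have "vec.span {a} \<subseteq> U"
    using assms(3,4) by (simp add: vec.span_minimal)
  then have "(A - mat 1) *v u \<in> U"
    using reflection_image_subset_span[OF assms(1,2)] by blast
  moreover have "A *v u = u + (A - mat 1) *v u"
    by (simp add: matrix_vector_mult_diff_rdistrib)
  ultimately show ?thesis
    using assms(3,5) by (simp add: vec.subspace_add)
qed

text \<open>An injective linear map of a finite-dimensional space into itself is onto.\<close>

lemma left_inverse_preserves_subspace:
  fixes A B :: "'f::field^'n^'n"
  assumes BA: "B ** A = mat 1" and U: "vec.subspace U" and AU: "\<forall>u\<in>U. A *v u \<in> U"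
    and u: "u \<in> U"
  shows "B *v u \<in> U"
proof -
  have inj: "inj ((*v) A)"
    by (metis BA inj_on_inverseI matrix_vector_mul_assoc matrix_vector_mul_lid)
  have "vec.dim ((*v) A ` U) = vec.dim U"
    using inj_on_subset[OF inj subset_UNIV] by (intro vec.dim_image_eq) auto
  then have "(*v) A ` U = U"
    using AU U
    by (intro vec.subspace_dim_equal vec.linear_subspace_image[OF matrix_vector_mul_linear_gen]) auto
  then obtain v where "v \<in> U" "u = A *v v"
    using u by auto
  then show ?thesis
    using BA by (simp add: matrix_vector_mul_assoc)
qed

lemma representation_generate_preserves_subspace:
  fixes rho :: "'g \<Rightarrow> 'f::field^'n^'n"
  assumes G: "group G" and rep: "is_representation G rho" and S: "S \<subseteq> carrier G"
    and U: "vec.subspace U" and SU: "\<forall>g\<in>S. \<forall>u\<in>U. rho g *v u \<in> U"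
    and g: "g \<in> generate G S"
  shows "\<forall>u\<in>U. rho g *v u \<in> U"
  using g
proof (induction rule: generate.induct)
  case one
  then show ?case
    using rep by (simp add: is_representation_def)
next
  case (incl h)
  then show ?case using SU by blast
next
  case (inv h)
  then have h: "h \<in> carrier G"
    using S by blast
  have "rho (inv\<^bsub>G\<^esub> h) ** rho h = rho (inv\<^bsub>G\<^esub> h \<otimes>\<^bsub>G\<^esub> h)"
    using rep G h by (simp add: is_representation_def group.inv_closed)
  also have "\<dots> = mat 1"
    using rep G h by (simp add: is_representation_def group.l_inv)
  finally show ?case
    using left_inverse_preserves_subspace U SU inv by blast
next
  case (eng h1 h2)
  then have "h1 \<in> carrier G" "h2 \<in> carrier G"
    using group.generate_in_carrier[OF G S] by auto
  then show ?case
    using eng.IH rep by (simp add: is_representation_def flip: matrix_vector_mul_assoc)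
qed

lemma irreducible_reflection_vectors_span:
  fixes rho :: "'g \<Rightarrow> 'f::field^'n^'n"
  assumes G: "group G" and S: "s ` I \<subseteq> carrier G" and gen: "generate G (s ` I) = carrier G"
    and rep: "is_representation G rho" and irr: "irreducible_rep G rho"
    and refl: "\<forall>l\<in>I. is_reflection (rho (s l))"
    and rv: "\<forall>l\<in>I. reflection_vector (rho (s l)) (\<alpha> l)"
    and "i \<in> I"
  shows "vec.span (\<alpha> ` I) = UNIV"
proof -
  let ?U = "vec.span (\<alpha> ` I)"
  have "\<forall>u\<in>?U. rho g *v u \<in> ?U" if g: "g \<in> s ` I" for g
  proof -
    obtain l where "l \<in> I" "g = s l"
      using g by blast
    then show ?thesis
      using refl rv reflection_preserves_subspace[OF _ _ vec.subspace_span vec.span_base] by blast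
  qed
  then have "\<forall>g\<in>carrier G. \<forall>u\<in>?U. rho g *v u \<in> ?U"
    using representation_generate_preserves_subspace[OF G rep S vec.subspace_span] gen by blast
  then have "?U = {0} \<or> ?U = UNIV"
    using irr by (simp add: irreducible_rep_def)
  moreover have "\<alpha> i \<in> ?U" "\<alpha> i \<noteq> 0"
    using \<open>i \<in> I\<close> rv by (auto simp: vec.span_base reflection_vector_def)
  ultimately show ?thesis by auto
qed

lemma lin_indep_family_extend:
  fixes \<alpha> :: "nat \<Rightarrow> 'f::field^'n"
  assumes span: "vec.span (\<alpha> ` K) = UNIV" and "finite K" and indep: "lin_indep_family bs"
    and bs: "set bs \<subseteq> \<alpha> ` K" and len: "length bs + m \<le> CARD('n)"
  shows "\<exists>ix. length ix = m \<and> distinct ix \<and> set ix \<subseteq> K \<and> lin_indep_family (bs @ map \<alpha> ix)"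
proof -
  have "vec.independent (set bs)" and "distinct bs"
    using indep by (auto simp: lin_indep_family_def)
  obtain C where C: "set bs \<subseteq> C" "C \<subseteq> \<alpha> ` K" "vec.independent C" "\<alpha> ` K \<subseteq> vec.span C"
    using vec.maximal_independent_subset_extend[OF bs \<open>vec.independent (set bs)\<close>] by blast
  have "finite C"
    using C(2) \<open>finite K\<close> finite_subset by blast
  have "vec.span C = UNIV"
    using C(4) span by (metis top.extremum_uniqueI vec.span_mono vec.span_span)
  then have "card C = CARD('n)"
    using vec.dim_span_eq_card_independent[OF C(3)] vec_dim_card by metis
  moreover have "card (C - set bs) = card C - length bs"
    using C(1) \<open>finite C\<close> \<open>distinct bs\<close> by (simp add: card_Diff_subset distinct_card)
  ultimately have "m \<le> card (C - set bs)"
    using len by simp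
  then obtain T where T: "T \<subseteq> C - set bs" "card T = m"
    by (meson obtain_subset_with_card_n)
  moreover have "finite T"
    using T(1) \<open>finite C\<close> finite_subset by blast
  ultimately obtain xs where xs: "set xs = T" "distinct xs"
    using finite_distinct_list by blast
  have "\<forall>v\<in>T. \<exists>l. l \<in> K \<and> \<alpha> l = v"
    using T(1) C(2) by auto
  then obtain f where f: "\<And>v. v \<in> T \<Longrightarrow> f v \<in> K \<and> \<alpha> (f v) = v"
    by metis
  define ix where "ix = map f xs"
  have map_ix: "map \<alpha> ix = xs"
    unfolding ix_def map_map using f xs(1) by (intro map_idI) auto
  have "vec.independent (set bs \<union> set xs)"
    using vec.independent_mono[OF C(3)] xs(1) T(1) C(1) by blast
  then have "lin_indep_family (bs @ map \<alpha> ix)"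
    unfolding lin_indep_family_def map_ix using \<open>distinct bs\<close> xs T(1) by auto
  moreover have "length ix = m"
    using xs T(2) distinct_card unfolding ix_def by fastforce
  moreover have "distinct ix"
    using xs(2) map_ix by (metis distinct_map)
  moreover have "set ix \<subseteq> K"
    using f xs(1) unfolding ix_def by auto
  ultimately show ?thesis by blast
qed

lemma lin_indep_family_singleton:
  "lin_indep_family [u] \<longleftrightarrow> u \<noteq> 0"
  by (simp add: lin_indep_family_def vec.independent_insert vec.independent_empty vec.span_empty)

lemma lin_indep_family_pair_if_not_proportional:
  assumes "\<not> proportional u v"
  shows "lin_indep_family [u, v]"
proof -
  have "v \<noteq> 0" "u \<noteq> v"
    using assms unfolding proportional_def by (metis vector_smult_lzero, metis vector_smult_lid)
  moreover have "u \<notin> vec.span {v}"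
    using assms unfolding proportional_def vec.span_singleton by auto
  ultimately show ?thesis
    by (simp add: lin_indep_family_def vec.independent_insert vec.independent_empty vec.span_empty)
qed

theorem lemma5p8:
  fixes G :: "('g, 'b) monoid_scheme"
    and s :: "nat \<Rightarrow> 'g"
    and k :: nat
    and rho :: "'g \<Rightarrow> ('f::field_char_0)^'n^'n"
    and \<alpha> :: "nat \<Rightarrow> 'f^'n"
    and d i j :: nat
  assumes "group G"
    and "s ` {1..k} \<subseteq> carrier G"
    and "generate G (s ` {1..k}) = carrier G"
    and "is_representation G rho"
    and "irreducible_rep G rho"
    and "\<forall>l\<in>{1..k}. is_reflection (rho (s l))"
    and "\<forall>l\<in>{1..k}. reflection_vector (rho (s l)) (\<alpha> l)"
    and "1 \<le> d" and "d \<le> CARD('n) - 1"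
    and "i \<in> {1..k}" and "j \<in> {1..k}" and "i \<noteq> j"
  shows "\<exists>is :: nat list. length is = d - 1 \<and> distinct is \<and> set is \<subseteq> {1..k} \<and>
     (\<not> proportional (\<alpha> i) (\<alpha> j) \<longrightarrow> lin_indep_family (map \<alpha> (i # j # is))) \<and>
     (proportional (\<alpha> i) (\<alpha> j) \<longrightarrow> lin_indep_family (map \<alpha> (i # is)))"
proof -
  have span: "vec.span (\<alpha> ` {1..k}) = UNIV"
    using irreducible_reflection_vectors_span[OF assms(1-7,10)] .
  have "\<alpha> i \<noteq> 0"
    using assms(7,10) by (auto simp: reflection_vector_def)
  show ?thesis
  proof (cases "proportional (\<alpha> i) (\<alpha> j)")
    case True
    have "lin_indep_family [\<alpha> i]"
      using \<open>\<alpha> i \<noteq> 0\<close> by (simp add: lin_indep_family_singleton)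
    moreover have "set [\<alpha> i] \<subseteq> \<alpha> ` {1..k}" "length [\<alpha> i] + (d - 1) \<le> CARD('n)"
      using assms(8-10) by auto
    ultimately obtain ix where "length ix = d - 1" "distinct ix" "set ix \<subseteq> {1..k}"
        "lin_indep_family ([\<alpha> i] @ map \<alpha> ix)"
      by (metis lin_indep_family_extend[OF span finite_atLeastAtMost])
    then show ?thesis
      using True by (intro exI[of _ ix]) simp
  next
    case False
    then have "lin_indep_family [\<alpha> i, \<alpha> j]"
      by (rule lin_indep_family_pair_if_not_proportional)
    moreover have "set [\<alpha> i, \<alpha> j] \<subseteq> \<alpha> ` {1..k}" "length [\<alpha> i, \<alpha> j] + (d - 1) \<le> CARD('n)"
      using assms(8-11) by auto
    ultimately obtain ix where "length ix = d - 1" "distinct ix" "set ix \<subseteq> {1..k}"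
        "lin_indep_family ([\<alpha> i, \<alpha> j] @ map \<alpha> ix)"
      by (metis lin_indep_family_extend[OF span finite_atLeastAtMost])
    then show ?thesis
      using False by (intro exI[of _ ix]) simp
  qed
qed

end
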